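(* Let $n\ge 3$ be an integer and let $\{D_I\}_{I\in\binom{[n]}{n-1}}$ be a family of positive real numbers, where $[n]=\{1,\dots,n\}$; write $D_{\hat i}=D_{[n]\setminus\{i\}}$ for $i\in[n]$. There exists a positive-weighted tree $\mathcal T=(T,w)$ with vertex set exactly $V(T)=[n]$ such that $D_{\hat i}(\mathcal T)=D_{\hat i}$ for all $i\in[n]$ if and only if the following three conditions hold: (i) $(n-2)D_{\hat i}\le \sum_{j\in[n]\setminus\{i\}} D_{\hat j}$ for every $i\in[n]$, and at most one of these inequalities is an equality; (ii) either one of the inequalities in (i) is an equality, or the maximum of $\{D_{\hat i}\}_{i\in[n]}$ is attained by at least two indices $i$; (iii) the maximum of $\{D_{\hat i}\}_{i\in[n]}$ is attained by at most $n-2$ indices $i$.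
   Context: All graphs are simple and finite. A positive-weighted graph $\mathcal G=(G,w)$ is a graph $G$ with a function $w:E(G)\to\mathbb R_{>0}$; for a subgraph $G'$, $w(G')$ is the sum of the weights of the edges of $G'$. For distinct vertices $i_1,\dots,i_k$ of $G$, $D_{\{i_1,\dots,i_k\}}(\mathcal G)$ is the minimum of $w(R)$ over all connected subgraphs $R$ of $G$ whose vertex set contains $i_1,\dots,i_k$. We write $D_{\hat i}(\mathcal G)=D_{[n]\setminus\{i\}}(\mathcal G)$. *)

theory Defs
  imports Complex_Main
begin

definition simple_graph :: "'a set \<Rightarrow> 'a set set \<Rightarrow> bool" where
  "simple_graph V E \<longleftrightarrow> finite V \<and> (\<forall>e\<in>E. e \<subseteq> V \<and> card e = 2)"

definition adj :: "'a set set \<Rightarrow> ('a \<times> 'a) set" where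
  "adj E = {(u, v). {u, v} \<in> E}"

definition connected_graph :: "'a set \<Rightarrow> 'a set set \<Rightarrow> bool" where
  "connected_graph V E \<longleftrightarrow> simple_graph V E \<and> V \<noteq> {} \<and>
     (\<forall>u\<in>V. \<forall>v\<in>V. (u, v) \<in> (adj E)\<^sup>*)"

definition is_cycle :: "'a set set \<Rightarrow> 'a list \<Rightarrow> bool" where
  "is_cycle E cs \<longleftrightarrow> length cs \<ge> 3 \<and> distinct cs \<and>
     (\<forall>i < length cs - 1. {cs ! i, cs ! Suc i} \<in> E) \<and> {last cs, hd cs} \<in> E"

definition is_tree :: "'a set \<Rightarrow> 'a set set \<Rightarrow> bool" where
  "is_tree V E \<longleftrightarrow> connected_graph V E \<and> \<not> (\<exists>cs. is_cycle E cs)"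

definition connected_subgraph :: "'a set \<Rightarrow> 'a set set \<Rightarrow> 'a set \<Rightarrow> 'a set set \<Rightarrow> bool" where
  "connected_subgraph V E VR ER \<longleftrightarrow> VR \<subseteq> V \<and> ER \<subseteq> E \<and> connected_graph VR ER"

definition Dmin :: "'a set \<Rightarrow> 'a set set \<Rightarrow> ('a set \<Rightarrow> real) \<Rightarrow> 'a set \<Rightarrow> real" where
  "Dmin V E w S = Min {sum w ER | VR ER. connected_subgraph V E VR ER \<and> S \<subseteq> VR}"

end

theory Submission
  imports Defs "HOL-Library.Transitive_Closure_Table"
begin

text \<open>Deleting a vertex with two neighbours from a positively weighted tree forces every edge to be
  kept, since the two neighbours must stay connected; deleting a leaf \<open>l\<close> only drops its pendant edge
  \<open>e\<^sub>l\<close>. So with \<open>W\<close> the total weight, \<open>D\<^sub>i = W\<close> at inner vertices and \<open>D\<^sub>l = W - w(e\<^sub>l) < W\<close> at leaves.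
  Hence \<open>M = max D\<^sub>i\<close> equals \<open>W\<close> and is attained exactly at the inner vertices, and
  \<open>s = \<Sum>\<^sub>i (M - D\<^sub>i)\<close> is the weight of the leaf edges: \<open>s \<le> M\<close>, with equality iff the tree is a star,
  and at least two vertices are leaves. Conversely, take a tree whose leaves are the non-maximal
  vertices, weight each leaf edge \<open>e\<^sub>l\<close> by \<open>M - D\<^sub>l\<close> and share \<open>M - s\<close> equally among the other edges.
  Conditions (i)--(iii) merely rewrite: \<open>s \<le> M\<close>; \<open>s = M\<close> iff the maximum is attained once; the
  maximum is attained at most \<open>n - 2\<close> times.\<close>

lemma adj_iff: "(u, v) \<in> adj E \<longleftrightarrow> {u, v} \<in> E"
  by (simp add: adj_def)

lemma rtrancl_adj_mono: "F \<subseteq> E \<Longrightarrow> (u, v) \<in> (adj F)\<^sup>* \<Longrightarrow> (u, v) \<in> (adj E)\<^sup>*"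
proof -
  assume "F \<subseteq> E" "(u, v) \<in> (adj F)\<^sup>*"
  moreover have "adj F \<subseteq> adj E" using \<open>F \<subseteq> E\<close> by (auto simp: adj_def)
  ultimately show ?thesis using rtrancl_mono by blast
qed

lemma sym_rtrancl_adj: "(u, v) \<in> (adj E)\<^sup>* \<Longrightarrow> (v, u) \<in> (adj E)\<^sup>*"
proof -
  have "sym (adj E)" unfolding sym_def adj_def by (auto simp: insert_commute)
  then show "(u, v) \<in> (adj E)\<^sup>* \<Longrightarrow> (v, u) \<in> (adj E)\<^sup>*" by (meson sym_rtrancl symD)
qed

lemma simple_graph_edge_distinct: "simple_graph V E \<Longrightarrow> {a, b} \<in> E \<Longrightarrow> a \<noteq> b"
  unfolding simple_graph_def by force

lemma simple_graph_edge_in: "simple_graph V E \<Longrightarrow> {a, b} \<in> E \<Longrightarrow> a \<in> V \<and> b \<in> V"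
  unfolding simple_graph_def by blast

lemma simple_graph_edge_obtain:
  "simple_graph V E \<Longrightarrow> e \<in> E \<Longrightarrow> v \<in> e \<Longrightarrow> \<exists>u. u \<noteq> v \<and> e = {v, u}"
  unfolding simple_graph_def by (metis card_2_iff empty_iff insert_commute insert_iff)

lemma simple_graph_finite_edges: "simple_graph V E \<Longrightarrow> finite E"
  unfolding simple_graph_def by (meson PowI finite_Pow_iff finite_subset subsetI)

lemma tree_simple_graph: "is_tree V E \<Longrightarrow> simple_graph V E"
  unfolding is_tree_def connected_graph_def by blast

lemma tree_connected: "is_tree V E \<Longrightarrow> u \<in> V \<Longrightarrow> v \<in> V \<Longrightarrow> (u, v) \<in> (adj E)\<^sup>*"
  unfolding is_tree_def connected_graph_def by blast

lemma tree_no_cycle: "is_tree V E \<Longrightarrow> \<not> is_cycle E cs"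
  unfolding is_tree_def by blast

lemma tree_neighbour_exists:
  assumes "is_tree V E" "v \<in> V" "u \<in> V" "u \<noteq> v"
  shows "\<exists>x. {v, x} \<in> E"
  using tree_connected[OF assms(1-3)] assms(4)
  by (cases rule: converse_rtranclE) (auto simp: adj_iff)

definition is_path :: "'a set set \<Rightarrow> 'a list \<Rightarrow> bool" where
  "is_path E p \<longleftrightarrow> distinct p \<and> (\<forall>i < length p - 1. {p ! i, p ! Suc i} \<in> E)"

lemma is_cycle_iff: "is_cycle E cs \<longleftrightarrow> length cs \<ge> 3 \<and> is_path E cs \<and> {last cs, hd cs} \<in> E"
  unfolding is_cycle_def is_path_def by blast

lemma rtrancl_path_nth:
  "rtrancl_path r a xs b \<Longrightarrow> last (a # xs) = b \<and> (\<forall>i < length xs. r ((a # xs) ! i) ((a # xs) ! Suc i))"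
  by (induction rule: rtrancl_path.induct) (auto simp: less_Suc_eq_0_disj)

lemma rtrancl_adj_obtain_path:
  assumes "(a, b) \<in> (adj E)\<^sup>*"
  obtains p where "is_path E p" "p \<noteq> []" "hd p = a" "last p = b"
proof -
  have "(\<lambda>x y. (x, y) \<in> adj E)\<^sup>*\<^sup>* a b" using assms by (simp add: rtranclp_rtrancl_eq)
  then obtain xs where "rtrancl_path (\<lambda>x y. (x, y) \<in> adj E) a xs b"
    using rtranclp_eq_rtrancl_path by metis
  then obtain xs' where xs': "rtrancl_path (\<lambda>x y. (x, y) \<in> adj E) a xs' b" "distinct (a # xs')"
    using rtrancl_path_distinct by metis
  show thesis
    using that[of "a # xs'"] rtrancl_path_nth[OF xs'(1)] xs'(2) by (auto simp: is_path_def adj_iff)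
qed

lemma tree_edge_bridge:
  assumes T: "is_tree V E" and e: "{a, b} \<in> E"
  shows "(a, b) \<notin> (adj (E - {{a, b}}))\<^sup>*"
proof
  assume "(a, b) \<in> (adj (E - {{a, b}}))\<^sup>*"
  then obtain p where p: "is_path (E - {{a, b}}) p" "p \<noteq> []" "hd p = a" "last p = b"
    by (rule rtrancl_adj_obtain_path)
  have ab: "a \<noteq> b" using simple_graph_edge_distinct[OF tree_simple_graph[OF T] e] .
  have "length p \<ge> 3"
  proof (cases p rule: remdups_adj.cases)
    case (3 x y zs)
    then show ?thesis
    proof (cases zs)
      case Nil
      then show ?thesis using p 3 unfolding is_path_def by auto
    qed simp
  qed (use p ab in auto)
  with p e have "is_cycle E p"
    unfolding is_cycle_iff is_path_def by (auto simp: insert_commute)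
  with tree_no_cycle[OF T] show False by blast
qed

lemma is_path_snoc:
  assumes "is_path E p" "p \<noteq> []" "u \<notin> set p" "{last p, u} \<in> E"
  shows "is_path E (p @ [u])"
  unfolding is_path_def
proof (intro conjI allI impI)
  show "distinct (p @ [u])" using assms(1,3) unfolding is_path_def by simp
  fix i assume "i < length (p @ [u]) - 1"
  then consider "i < length p - 1" | "i = length p - 1" by fastforce
  then show "{(p @ [u]) ! i, (p @ [u]) ! Suc i} \<in> E"
  proof cases
    case 1
    then have "Suc i < length p" by simp
    then show ?thesis using 1 assms(1) unfolding is_path_def by (simp add: nth_append)
  next
    case 2
    then show ?thesis using assms(2,4) by (simp add: nth_append last_conv_nth)
  qed
qed

lemma is_path_rev: "is_path E p \<Longrightarrow> is_path E (rev p)"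
  unfolding is_path_def
proof (intro conjI allI impI)
  fix i assume p: "distinct p \<and> (\<forall>i < length p - 1. {p ! i, p ! Suc i} \<in> E)"
    and i: "i < length (rev p) - 1"
  then have "{p ! (length p - 2 - i), p ! Suc (length p - 2 - i)} \<in> E" by simp
  moreover have "Suc (length p - 2 - i) = length p - 1 - i" using i by simp
  ultimately show "{rev p ! i, rev p ! Suc i} \<in> E"
    using i by (simp add: rev_nth insert_commute)
qed simp

lemma is_path_chord_cycle:
  assumes p: "is_path E p" and j: "j + 2 < length p" and e: "{last p, p ! j} \<in> E"
  shows "is_cycle E (drop j p)"
  unfolding is_cycle_iff is_path_def
proof (intro conjI allI impI)
  show "distinct (drop j p)" using p unfolding is_path_def by simp
  fix i assume "i < length (drop j p) - 1"
  then show "{drop j p ! i, drop j p ! Suc i} \<in> E"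
    using p unfolding is_path_def by (simp add: add.commute)
qed (use j e in \<open>auto simp: hd_drop_conv_nth\<close>)

definition pendant :: "'a set set \<Rightarrow> 'a \<Rightarrow> 'a \<Rightarrow> bool" where
  "pendant E v x \<longleftrightarrow> {v, x} \<in> E \<and> (\<forall>e\<in>E. v \<in> e \<longrightarrow> e = {v, x})"

definition leaves :: "'a set \<Rightarrow> 'a set set \<Rightarrow> 'a set" where
  "leaves V E = {v \<in> V. \<exists>x. pendant E v x}"

lemma leaves_subset: "leaves V E \<subseteq> V"
  unfolding leaves_def by blast

definition leaf_edge :: "'a set set \<Rightarrow> 'a \<Rightarrow> 'a set" where
  "leaf_edge E v = (THE e. e \<in> E \<and> v \<in> e)"

lemma pendant_unique: "pendant E v x \<Longrightarrow> {v, u} \<in> E \<Longrightarrow> u = x"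
  unfolding pendant_def by (metis doubleton_eq_iff insertI1)

lemma leaf_edge_pendant: "pendant E v x \<Longrightarrow> leaf_edge E v = {v, x}"
  unfolding leaf_edge_def pendant_def by (rule the_equality) blast+

lemma leaf_edgeE:
  assumes "v \<in> leaves V E"
  obtains x where "pendant E v x" "leaf_edge E v = {v, x}"
proof -
  obtain x where "pendant E v x" using assms unfolding leaves_def by blast
  then show thesis using that leaf_edge_pendant by metis
qed

lemma not_pendant_two_neighbours:
  assumes sg: "simple_graph V E" and x: "{v, x} \<in> E" and "\<not> pendant E v x"
  obtains y where "{v, y} \<in> E" "y \<noteq> x"
proof -
  obtain e where e: "e \<in> E" "v \<in> e" "e \<noteq> {v, x}" using assms unfolding pendant_def by auto
  obtain y where "y \<noteq> v" "e = {v, y}" using simple_graph_edge_obtain[OF sg e(1,2)] by blast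
  then show thesis using that e by blast
qed

section \<open>Deleting one vertex from a weighted tree\<close>

lemma connected_subgraph_keeps_edge:
  assumes T: "is_tree V E" and S: "connected_subgraph V E VR ER" and VR: "V - {v} \<subseteq> VR"
    and e: "e \<in> E" and ve: "v \<notin> e"
  shows "e \<in> ER"
proof (rule ccontr)
  assume "e \<notin> ER"
  have sg: "simple_graph V E" using tree_simple_graph[OF T] .
  have "card e = 2" using sg e unfolding simple_graph_def by blast
  then obtain a b where ab: "e = {a, b}" by (meson card_2_iff)
  have "a \<in> VR" "b \<in> VR" using simple_graph_edge_in[OF sg] e ab ve VR by auto
  then have "(a, b) \<in> (adj ER)\<^sup>*"
    using S unfolding connected_subgraph_def connected_graph_def by simp
  moreover have "ER \<subseteq> E - {{a, b}}" using S \<open>e \<notin> ER\<close> ab unfolding connected_subgraph_def by auto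
  ultimately have "(a, b) \<in> (adj (E - {{a, b}}))\<^sup>*" by (rule rtrancl_adj_mono[rotated])
  then show False using tree_edge_bridge[OF T] e ab by simp
qed

lemma Dmin_eqI:
  assumes "simple_graph V E" and "connected_subgraph V E V0 E0" and "S \<subseteq> V0"
    and "\<And>VR ER. connected_subgraph V E VR ER \<Longrightarrow> S \<subseteq> VR \<Longrightarrow> sum w E0 \<le> sum w ER"
  shows "Dmin V E w S = sum w E0"
  unfolding Dmin_def
proof (rule Min_eqI)
  have "{sum w ER |VR ER. connected_subgraph V E VR ER \<and> S \<subseteq> VR} \<subseteq> sum w ` Pow E"
    unfolding connected_subgraph_def by blast
  then show "finite {sum w ER |VR ER. connected_subgraph V E VR ER \<and> S \<subseteq> VR}"
    using simple_graph_finite_edges[OF assms(1)] by (meson finite_Pow_iff finite_imageI finite_subset)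
qed (use assms in blast)+

lemma Dmin_delete_inner:
  assumes T: "is_tree V E" and x: "{v, x} \<in> E" and y: "{v, y} \<in> E" and xy: "x \<noteq> y"
  shows "Dmin V E w (V - {v}) = sum w E"
proof (rule Dmin_eqI)
  have sg: "simple_graph V E" using tree_simple_graph[OF T] .
  then show "simple_graph V E" .
  show "connected_subgraph V E V E" using T unfolding connected_subgraph_def is_tree_def by simp
  fix VR ER assume S: "connected_subgraph V E VR ER" and VR: "V - {v} \<subseteq> VR"
  have ERE: "ER \<subseteq> E" using S unfolding connected_subgraph_def by simp
  have "e \<in> ER" if e: "e \<in> E" for e
  proof (cases "v \<in> e")
    case True
    obtain a where a: "a \<noteq> v" "e = {v, a}" using simple_graph_edge_obtain[OF sg e True] by blast
    define c where "c = (if x \<noteq> a then x else y)"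
    have cE: "{v, c} \<in> E" and ca: "c \<noteq> a" using x y xy unfolding c_def by auto
    have cv: "c \<noteq> v" using simple_graph_edge_distinct[OF sg cE] by simp
    show "e \<in> ER"
    proof (rule ccontr)
      assume "e \<notin> ER"
      have "a \<in> V" "c \<in> V"
        using simple_graph_edge_in[OF sg cE] simple_graph_edge_in[OF sg, of v a] e a(2) by auto
      then have "a \<in> VR" "c \<in> VR" using VR a(1) cv by auto
      then have "(a, c) \<in> (adj ER)\<^sup>*"
        using S unfolding connected_subgraph_def connected_graph_def by simp
      then have ac: "(a, c) \<in> (adj (E - {e}))\<^sup>*"
        by (rule rtrancl_adj_mono[rotated]) (use ERE \<open>e \<notin> ER\<close> in blast)
      have "{c, v} \<noteq> e" using a(2) ca cv by (auto simp: doubleton_eq_iff)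
      moreover have "{c, v} \<in> E" using cE by (simp add: insert_commute)
      ultimately have "(c, v) \<in> adj (E - {e})" by (simp add: adj_iff)
      with ac have "(a, v) \<in> (adj (E - {e}))\<^sup>*" by (rule rtrancl_into_rtrancl)
      moreover have "e = {a, v}" using a(2) by (simp add: insert_commute)
      ultimately show False using tree_edge_bridge[OF T, of a v] e by simp
    qed
  next
    case False
    then show ?thesis using connected_subgraph_keeps_edge[OF T S VR e] by blast
  qed
  then have "ER = E" using ERE by blast
  then show "sum w E \<le> sum w ER" by simp
qed simp

lemma connected_delete_pendant:
  assumes sg: "simple_graph V E" and v: "pendant E v x"
    and p: "(u, y) \<in> (adj E)\<^sup>*" and u: "u \<noteq> v" and y: "y \<noteq> v"
  shows "(u, y) \<in> (adj (E - {{v, x}}))\<^sup>*"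
proof -
  have "(if z = v then (u, x) else (u, z)) \<in> (adj (E - {{v, x}}))\<^sup>*" if "(u, z) \<in> (adj E)\<^sup>*" for z
    using that
  proof (induction rule: rtrancl_induct)
    case (step y z)
    have yz: "{y, z} \<in> E" "y \<noteq> z"
      using step(2) simple_graph_edge_distinct[OF sg] by (auto simp: adj_iff)
    consider "z = v" | "y = v" | "y \<noteq> v" "z \<noteq> v" by blast
    then show ?case
    proof cases
      case 1
      then show ?thesis using step(3) yz pendant_unique[OF v, of y] by (simp add: insert_commute)
    next
      case 2
      then show ?thesis using step(3) yz pendant_unique[OF v, of z] by simp
    next
      case 3
      then have "(y, z) \<in> adj (E - {{v, x}})" using yz by (auto simp: adj_iff doubleton_eq_iff)
      then show ?thesis using step(3) 3 by simp
    qed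
  qed (use u in simp)
  from this[OF p] y show ?thesis by simp
qed

lemma Dmin_delete_pendant:
  assumes T: "is_tree V E" and v: "pendant E v x" and wpos: "\<forall>e\<in>E. w e > 0"
  shows "Dmin V E w (V - {v}) = sum w E - w {v, x}"
proof -
  have sg: "simple_graph V E" using tree_simple_graph[OF T] .
  have fin: "finite E" using simple_graph_finite_edges[OF sg] .
  have e0: "{v, x} \<in> E" using v unfolding pendant_def by blast
  have xV: "x \<in> V" "x \<noteq> v"
    using simple_graph_edge_in[OF sg e0] simple_graph_edge_distinct[OF sg e0] by auto
  have "Dmin V E w (V - {v}) = sum w (E - {{v, x}})"
  proof (rule Dmin_eqI[OF sg])
    show "connected_subgraph V E (V - {v}) (E - {{v, x}})"
      unfolding connected_subgraph_def connected_graph_def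
      using sg v xV connected_delete_pendant[OF sg v tree_connected[OF T]]
      unfolding simple_graph_def pendant_def by blast
    fix VR ER assume S: "connected_subgraph V E VR ER" and VR: "V - {v} \<subseteq> VR"
    have "E - {{v, x}} \<subseteq> ER"
      using connected_subgraph_keeps_edge[OF T S VR] v unfolding pendant_def by blast
    moreover have "ER \<subseteq> E" using S unfolding connected_subgraph_def by blast
    ultimately show "sum w (E - {{v, x}}) \<le> sum w ER"
      using fin wpos by (intro sum_mono2) (auto intro: finite_subset less_imp_le)
  qed simp
  also have "\<dots> = sum w E - w {v, x}" using fin e0 by (simp add: sum_diff1)
  finally show ?thesis .
qed

section \<open>Leaves of a tree\<close>

lemma tree_star:
  assumes T: "is_tree V E" and x: "x \<in> V" and y: "y \<in> V"
    and nbrs: "\<And>u. {x, u} \<in> E \<Longrightarrow> \<exists>z. pendant E u z"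
  shows "y = x \<or> {x, y} \<in> E"
  using tree_connected[OF T x y]
proof (induction rule: rtrancl_induct)
  case (step y z)
  have yz: "{y, z} \<in> E" using step(2) by (simp add: adj_iff)
  show ?case
  proof (cases "y = x")
    case False
    then have "{x, y} \<in> E" using step(3) by simp
    then obtain z0 where z0: "pendant E y z0" using nbrs by blast
    have "x = z0" using pendant_unique[OF z0] \<open>{x, y} \<in> E\<close> by (simp add: insert_commute)
    moreover have "z = z0" using pendant_unique[OF z0 yz] .
    ultimately show ?thesis by simp
  qed (use yz in simp)
qed simp

lemma tree_no_adjacent_pendants:
  assumes T: "is_tree V E" and V: "card V \<ge> 3" and a: "pendant E a b"
  shows "\<not> pendant E b a"
proof
  assume b: "pendant E b a"
  have sg: "simple_graph V E" using tree_simple_graph[OF T] .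
  have ab: "{a, b} \<in> E" using a unfolding pendant_def by blast
  have "V \<subseteq> {a, b}"
  proof
    fix y assume "y \<in> V"
    moreover have "\<exists>z. pendant E u z" if "{a, u} \<in> E" for u
      using pendant_unique[OF a that] b by blast
    ultimately have "y = a \<or> {a, y} \<in> E"
      using tree_star[OF T _ _] simple_graph_edge_in[OF sg ab] by blast
    then show "y \<in> {a, b}" using pendant_unique[OF a] by blast
  qed
  then have "card V \<le> card {a, b}" by (simp add: card_mono)
  also have "\<dots> \<le> 2" by (simp add: card_insert_if)
  finally have "card V \<le> 2" .
  with V show False by simp
qed

lemma tree_inner_nonempty:
  assumes T: "is_tree V E" and V: "card V \<ge> 3"
  shows "V - leaves V E \<noteq> {}"
proof -
  have sg: "simple_graph V E" using tree_simple_graph[OF T] .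
  have "V \<noteq> {}" using V by auto
  then obtain v where v: "v \<in> V" by blast
  show ?thesis
  proof (cases "v \<in> leaves V E")
    case True
    then obtain x where x: "pendant E v x" unfolding leaves_def by blast
    have xv: "{x, v} \<in> E" using x unfolding pendant_def by (simp add: insert_commute)
    have "x \<in> V" using simple_graph_edge_in[OF sg xv] by blast
    moreover have "x \<notin> leaves V E"
    proof
      assume "x \<in> leaves V E"
      then obtain z where z: "pendant E x z" unfolding leaves_def by blast
      with pendant_unique[OF z xv] have "pendant E x v" by simp
      with tree_no_adjacent_pendants[OF T V x] show False by blast
    qed
    ultimately show ?thesis by blast
  qed (use v in blast)
qed

lemma longest_path_last_pendant:
  assumes T: "is_tree V E" and p: "is_path E p" "set p \<subseteq> V" "length p \<ge> 2"
    and longest: "\<And>q. is_path E q \<Longrightarrow> set q \<subseteq> V \<Longrightarrow> length q \<le> length p"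
  shows "pendant E (last p) (p ! (length p - 2))"
proof -
  have sg: "simple_graph V E" using tree_simple_graph[OF T] .
  define m where "m = length p"
  have m: "m \<ge> 2" "p \<noteq> []" using p(3) unfolding m_def by auto
  have last: "last p = p ! (m - 1)" using m(2) unfolding m_def by (simp add: last_conv_nth)
  have "{p ! (m - 2), p ! Suc (m - 2)} \<in> E" using p(1) m unfolding is_path_def m_def by simp
  then have e0: "{last p, p ! (m - 2)} \<in> E"
    using m(1) last by (simp add: Suc_diff_Suc numeral_2_eq_2 insert_commute)
  have nbr: "u = p ! (m - 2)" if u: "{last p, u} \<in> E" for u
  proof (rule ccontr)
    assume ne: "u \<noteq> p ! (m - 2)"
    show False
    proof (cases "u \<in> set p")
      case False
      have "is_path E (p @ [u])" using is_path_snoc[OF p(1) m(2) False u] .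
      moreover have "set (p @ [u]) \<subseteq> V" using p(2) simple_graph_edge_in[OF sg u] by simp
      ultimately show False using longest[of "p @ [u]"] by simp
    next
      case True
      then obtain j where j: "j < m" "p ! j = u" unfolding m_def by (metis in_set_conv_nth)
      have "u \<noteq> last p" using simple_graph_edge_distinct[OF sg u] by simp
      then have "j + 2 < m" using j ne last by (cases "j = m - 1 \<or> j = m - 2") auto
      then have "is_cycle E (drop j p)" using is_path_chord_cycle[OF p(1)] u j unfolding m_def by simp
      then show False using tree_no_cycle[OF T] by blast
    qed
  qed
  have "e = {last p, p ! (m - 2)}" if e: "e \<in> E" "last p \<in> e" for e
  proof -
    obtain u where "e = {last p, u}" using simple_graph_edge_obtain[OF sg e] by blast
    then show ?thesis using nbr e(1) by simp
  qed
  then show ?thesis using e0 unfolding pendant_def m_def by blast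
qed

lemma tree_two_leaves:
  assumes T: "is_tree V E" and V: "card V \<ge> 2"
  shows "card (leaves V E) \<ge> 2"
proof -
  have sg: "simple_graph V E" using tree_simple_graph[OF T] .
  have fin: "finite V" using V card.infinite by fastforce
  obtain v u where vu: "v \<in> V" "u \<in> V" "u \<noteq> v"
    using V fin by (metis card_2_iff' card_le_Suc0_iff_eq not_less_eq_eq numeral_2_eq_2)
  obtain x where x: "{v, x} \<in> E" using tree_neighbour_exists[OF T vu] by blast
  let ?P = "\<lambda>q. is_path E q \<and> set q \<subseteq> V"
  have "?P [v, x]"
    using x simple_graph_edge_distinct[OF sg x] simple_graph_edge_in[OF sg x]
    unfolding is_path_def by auto
  moreover have "length q < Suc (card V)" if "?P q" for q
    using that fin distinct_card[of q] card_mono[of V "set q"] unfolding is_path_def by simp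
  ultimately obtain p where p: "?P p" and longest: "\<And>q. ?P q \<Longrightarrow> length q \<le> length p"
    using ex_has_greatest_nat[of ?P "[v, x]" length] by blast
  have len: "length p \<ge> 2" using longest[OF \<open>?P [v, x]\<close>] by simp
  have "pendant E (last p) (p ! (length p - 2))"
    using longest_path_last_pendant[OF T _ _ len] p longest by blast
  moreover have "pendant E (last (rev p)) (rev p ! (length (rev p) - 2))"
    using longest_path_last_pendant[OF T is_path_rev] p longest len by simp
  moreover have "p \<noteq> []" "distinct p" using len p unfolding is_path_def by auto
  then have "hd p \<noteq> last p"
    using len by (simp add: hd_conv_nth last_conv_nth nth_eq_iff_index_eq)
  moreover have "hd p \<in> V" "last p \<in> V" using p \<open>p \<noteq> []\<close> by auto
  ultimately have "{hd p, last p} \<subseteq> leaves V E" "card {hd p, last p} = 2"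
    unfolding leaves_def by (auto simp: last_rev)
  then show ?thesis
    using card_mono[OF finite_subset[OF leaves_subset fin]] by metis
qed

lemma leaf_edge_in: "v \<in> leaves V E \<Longrightarrow> leaf_edge E v \<in> E"
  by (metis leaf_edgeE pendant_def)

lemma inj_on_leaf_edge:
  assumes T: "is_tree V E" and V: "card V \<ge> 3"
  shows "inj_on (leaf_edge E) (leaves V E)"
proof (rule inj_onI)
  fix l l' assume l: "l \<in> leaves V E" and l': "l' \<in> leaves V E" and eq: "leaf_edge E l = leaf_edge E l'"
  obtain x where x: "pendant E l x" "leaf_edge E l = {l, x}" using l by (rule leaf_edgeE)
  obtain x' where x': "pendant E l' x'" "leaf_edge E l' = {l', x'}" using l' by (rule leaf_edgeE)
  show "l = l'"
  proof (rule ccontr)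
    assume "l \<noteq> l'"
    then have "x = l'" "x' = l" using eq x(2) x'(2) by (auto simp: doubleton_eq_iff)
    then show False using tree_no_adjacent_pendants[OF T V] x(1) x'(1) by blast
  qed
qed

lemma leaf_edges_eq_iff:
  assumes T: "is_tree V E" and V: "card V \<ge> 3"
  shows "leaf_edge E ` leaves V E = E \<longleftrightarrow> card (V - leaves V E) = 1"
proof
  have sg: "simple_graph V E" using tree_simple_graph[OF T] .
  assume all: "leaf_edge E ` leaves V E = E"
  obtain c where c: "c \<in> V - leaves V E" using tree_inner_nonempty[OF T V] by blast
  have nbrs: "\<exists>z. pendant E u z" if "{c, u} \<in> E" for u
  proof -
    have "{c, u} \<in> leaf_edge E ` leaves V E" using all that by simp
    then obtain l where l: "l \<in> leaves V E" "{c, u} = leaf_edge E l" by (rule imageE)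
    obtain z where z: "pendant E l z" "leaf_edge E l = {l, z}" using l(1) by (rule leaf_edgeE)
    have "l \<noteq> c" using c l(1) by blast
    then have "l = u" using l(2) z(2) by (auto simp: doubleton_eq_iff)
    then show ?thesis using z(1) by blast
  qed
  have "y \<in> leaves V E" if y: "y \<in> V" "y \<noteq> c" for y
  proof -
    have "{c, y} \<in> E" using tree_star[OF T _ y(1) nbrs] c y(2) by blast
    then obtain z where "pendant E y z" using nbrs by blast
    then show ?thesis using y(1) unfolding leaves_def by blast
  qed
  then have "V - leaves V E = {c}" using c by auto
  then show "card (V - leaves V E) = 1" by simp
next
  have sg: "simple_graph V E" using tree_simple_graph[OF T] .
  assume one: "card (V - leaves V E) = 1"
  show "leaf_edge E ` leaves V E = E"
  proof (rule ccontr)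
    assume "leaf_edge E ` leaves V E \<noteq> E"
    moreover have "leaf_edge E ` leaves V E \<subseteq> E" by (auto intro: leaf_edge_in)
    ultimately obtain e where e: "e \<in> E" "e \<notin> leaf_edge E ` leaves V E" by auto
    have "card e = 2" using sg e(1) unfolding simple_graph_def by blast
    then obtain a b where ab: "e = {a, b}" "a \<noteq> b" by (meson card_2_iff)
    have "r \<notin> leaves V E" if "r \<in> e" for r
    proof
      assume "r \<in> leaves V E"
      then obtain z where z: "pendant E r z" "leaf_edge E r = {r, z}" by (rule leaf_edgeE)
      have "e = {r, z}" using z(1) e(1) that unfolding pendant_def by blast
      then have "e = leaf_edge E r" using z(2) by simp
      with e(2) \<open>r \<in> leaves V E\<close> show False by blast
    qed
    moreover have "{a, b} \<in> E" using e(1) ab(1) by simp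
    then have "a \<in> V" "b \<in> V" using simple_graph_edge_in[OF sg] by blast+
    ultimately have "{a, b} \<subseteq> V - leaves V E" using ab(1) by auto
    moreover have "finite (V - leaves V E)" using sg unfolding simple_graph_def by blast
    ultimately have "card {a, b} \<le> card (V - leaves V E)" by (simp add: card_mono)
    then show False using one ab(2) by simp
  qed
qed

section \<open>Trees with prescribed leaves\<close>

lemma tree_singleton: "is_tree {r} {}"
  unfolding is_tree_def connected_graph_def simple_graph_def is_cycle_def by auto

lemma is_cycle_two_neighbours:
  assumes cs: "is_cycle E cs" and v: "v \<in> set cs"
  obtains x y where "x \<noteq> y" "{x, v} \<in> E" "{v, y} \<in> E"
proof -
  define L where "L = length cs"
  have L: "L \<ge> 3" "distinct cs" "\<And>i. i < L - 1 \<Longrightarrow> {cs ! i, cs ! Suc i} \<in> E"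
    and closing: "{cs ! (L - 1), cs ! 0} \<in> E"
  proof -
    have "cs \<noteq> []" using cs unfolding is_cycle_def by auto
    then show "L \<ge> 3" "distinct cs" "\<And>i. i < L - 1 \<Longrightarrow> {cs ! i, cs ! Suc i} \<in> E"
      "{cs ! (L - 1), cs ! 0} \<in> E"
      using cs unfolding is_cycle_def L_def by (auto simp: hd_conv_nth last_conv_nth)
  qed
  obtain j where j: "j < L" "cs ! j = v" using v unfolding L_def by (metis in_set_conv_nth)
  define pj where "pj = (if j > 0 then j - 1 else L - 1)"
  define sj where "sj = (if j < L - 1 then j + 1 else 0)"
  have "{cs ! pj, v} \<in> E"
    using L(3)[of "j - 1"] closing j unfolding pj_def by (cases "j > 0") auto
  moreover have "{v, cs ! sj} \<in> E"
  proof (cases "j < L - 1")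
    case False
    then have "j = L - 1" using j(1) by simp
    then show ?thesis using closing j(2) unfolding sj_def by simp
  qed (use L(3)[of j] j in \<open>simp add: sj_def\<close>)
  moreover have "pj < L" "sj < L" "pj \<noteq> sj" using j L(1) unfolding pj_def sj_def by auto
  then have "cs ! pj \<noteq> cs ! sj" using L(2) unfolding L_def by (simp add: nth_eq_iff_index_eq)
  ultimately show thesis using that by blast
qed

lemma is_cycle_avoiding_edge:
  assumes cs: "is_cycle (insert {v, u} E) cs" and v: "v \<notin> set cs"
  shows "is_cycle E cs"
proof -
  have ne: "{a, b} \<noteq> {v, u}" if "a \<in> set cs" "b \<in> set cs" for a b
    using that v by (auto simp: doubleton_eq_iff)
  have "cs \<noteq> []" using cs unfolding is_cycle_def by auto
  then have "{last cs, hd cs} \<noteq> {v, u}" by (simp add: ne)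
  moreover have "{cs ! i, cs ! Suc i} \<noteq> {v, u}" if "i < length cs - 1" for i
    using that by (simp add: ne)
  ultimately show ?thesis using cs unfolding is_cycle_def by auto
qed

lemma tree_add_pendant:
  assumes T: "is_tree V E" and v: "v \<notin> V" and u: "u \<in> V"
  shows "is_tree (insert v V) (insert {v, u} E)"
proof -
  have sg: "simple_graph V E" using tree_simple_graph[OF T] .
  let ?V = "insert v V" and ?E = "insert {v, u} E"
  have "card {v, u} = 2" using u v by (metis card_2_iff)
  then have sg': "simple_graph ?V ?E" using sg u v unfolding simple_graph_def by auto
  have to_u: "(a, u) \<in> (adj ?E)\<^sup>*" if "a \<in> ?V" for a
  proof (cases "a = v")
    case True
    then show ?thesis by (simp add: adj_iff r_into_rtrancl)
  next
    case False
    then have "(a, u) \<in> (adj E)\<^sup>*" using that tree_connected[OF T _ u] by simp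
    then show ?thesis by (rule rtrancl_adj_mono[rotated]) (rule subset_insertI)
  qed
  have conn: "\<forall>a\<in>?V. \<forall>b\<in>?V. (a, b) \<in> (adj ?E)\<^sup>*"
    using to_u sym_rtrancl_adj by (meson rtrancl_trans)
  have only_u: "z = u" if "{z, v} \<in> ?E" for z
    using that v simple_graph_edge_in[OF sg, of z v] by (auto simp: doubleton_eq_iff)
  have "\<not> is_cycle ?E cs" for cs
  proof
    assume cs: "is_cycle ?E cs"
    show False
    proof (cases "v \<in> set cs")
      case True
      then obtain x y where "x \<noteq> y" "{x, v} \<in> ?E" "{v, y} \<in> ?E"
        by (rule is_cycle_two_neighbours[OF cs])
      then show False using only_u[of x] only_u[of y] by (simp add: insert_commute)
    next
      case False
      then show False using is_cycle_avoiding_edge[OF cs] tree_no_cycle[OF T] by blast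
    qed
  qed
  then show ?thesis unfolding is_tree_def connected_graph_def using sg' conn by blast
qed

lemma leaves_add_pendant:
  assumes T: "is_tree V E" and V: "card V \<ge> 2" and v: "v \<notin> V" and u: "u \<in> V"
  shows "leaves (insert v V) (insert {v, u} E) = insert v (leaves V E - {u})"
proof -
  have sg: "simple_graph V E" using tree_simple_graph[OF T] .
  let ?E = "insert {v, u} E"
  have vE: "v \<notin> e" if "e \<in> E" for e using sg that v unfolding simple_graph_def by blast
  have pv: "pendant ?E v u" unfolding pendant_def using vE by blast
  have pu: "\<not> pendant ?E u x" for x
  proof
    assume ux: "pendant ?E u x"
    have "V \<noteq> {u}" using V by auto
    then obtain y where "y \<in> V" "y \<noteq> u" using u by blast
    then obtain z where z: "{u, z} \<in> E" using tree_neighbour_exists[OF T u] by blast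
    have "z = x" using pendant_unique[OF ux, of z] z by simp
    moreover have "v = x" using pendant_unique[OF ux, of v] by (simp add: insert_commute)
    ultimately show False using vE[OF z] by simp
  qed
  have py: "pendant ?E y x \<longleftrightarrow> pendant E y x" if "y \<noteq> v" "y \<noteq> u" for y x
    using that unfolding pendant_def by (auto simp: doubleton_eq_iff)
  show ?thesis unfolding leaves_def
  proof (rule set_eqI)
    fix z
    consider "z = v" | "z = u" | "z \<noteq> v" "z \<noteq> u" by blast
    then show "z \<in> {y \<in> insert v V. \<exists>x. pendant ?E y x}
      \<longleftrightarrow> z \<in> insert v ({y \<in> V. \<exists>x. pendant E y x} - {u})"
      by cases (use pv pu py[of z] u v in auto)
  qed
qed

lemma leaves_edge: "a \<noteq> b \<Longrightarrow> leaves {a, b} {{a, b}} = {a, b}"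
  unfolding leaves_def pendant_def by (auto simp: insert_commute)

lemma tree_attach_pendant:
  assumes T: "is_tree (V - {v}) E" and V: "card (V - {v}) \<ge> 2" and v: "v \<in> V"
    and u: "u \<in> V" "u \<noteq> v"
  shows "is_tree V (insert {v, u} E) \<and> leaves V (insert {v, u} E) = insert v (leaves (V - {v}) E - {u})"
proof -
  have "insert v (V - {v}) = V" "u \<in> V - {v}" "v \<notin> V - {v}" using u v by auto
  then show ?thesis using tree_add_pendant[OF T] leaves_add_pendant[OF T V] by metis
qed

text \<open>Induction on \<open>V\<close>: hang a prescribed leaf on an inner vertex of a smaller tree, or, when only
  two leaves \<open>a, b\<close> are prescribed, hang \<open>a\<close> on an inner vertex \<open>k\<close> of a smaller tree with leaves \<open>k, b\<close>.\<close>
lemma exists_tree_with_leaves: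
  assumes "finite V" "L \<subseteq> V" "card L \<ge> 2" "L \<noteq> V \<or> card V = 2"
  shows "\<exists>E. is_tree V E \<and> leaves V E = L"
  using assms
proof (induction V arbitrary: L rule: finite_psubset_induct)
  case (psubset V)
  consider "card L = 2" "L = V" | "card L \<ge> 3" | "card L = 2" "L \<noteq> V"
    using psubset.prems by linarith
  then show ?case
  proof cases
    case 1
    then obtain a b where ab: "a \<noteq> b" "V = {a, b}" by (metis card_2_iff)
    have "is_tree {a, b} {{a, b}}" using tree_add_pendant[OF tree_singleton, of a b] ab(1) by simp
    then show ?thesis using 1 ab leaves_edge[OF ab(1)] by blast
  next
    case 2
    then have "L \<noteq> V" using psubset.prems(3) by auto
    then obtain k where k: "k \<in> V" "k \<notin> L" using psubset.prems(1) by blast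
    obtain l where l: "l \<in> L" using 2 by fastforce
    have fin: "finite L" using finite_subset[OF psubset.prems(1) psubset.hyps(1)] .
    have L': "card (L - {l}) \<ge> 2" "L - {l} \<subseteq> V - {l}" using 2 l fin psubset.prems(1) by auto
    moreover have "V - {l} \<subset> V" using l psubset.prems(1) by auto
    ultimately obtain E where T: "is_tree (V - {l}) E" and lv: "leaves (V - {l}) E = L - {l}"
      using psubset.IH[of "V - {l}" "L - {l}"] l k by auto
    have "card (V - {l}) \<ge> 2" using L' card_mono[of "V - {l}" "L - {l}"] psubset.hyps by simp
    moreover have "l \<in> V" "k \<noteq> l" using l k psubset.prems(1) by auto
    moreover have "insert l (L - {l} - {k}) = L" using l k by auto
    ultimately show ?thesis
      using tree_attach_pendant[OF T, of k] lv k(1) by (intro exI[of _ "insert {l, k} E"]) simp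
  next
    case 3
    then obtain a b where ab: "a \<noteq> b" "L = {a, b}" by (metis card_2_iff)
    obtain k where k: "k \<in> V" "k \<notin> L" using psubset.prems(1) 3(2) by blast
    have sub: "{k, b} \<subseteq> V - {a}" and kb: "k \<noteq> b" using k ab psubset.prems(1) by auto
    then have kb2: "card {k, b} = 2" by simp
    then have "{k, b} \<noteq> V - {a} \<or> card (V - {a}) = 2" by (cases "{k, b} = V - {a}") simp_all
    moreover have "V - {a} \<subset> V" using ab psubset.prems(1) by auto
    ultimately obtain E where T: "is_tree (V - {a}) E" and lv: "leaves (V - {a}) E = {k, b}"
      using psubset.IH[of "V - {a}" "{k, b}"] sub kb2 by auto
    have "card (V - {a}) \<ge> 2" using card_mono[OF _ sub] psubset.hyps kb2 by simp
    moreover have "a \<in> V" "k \<noteq> a" using ab k psubset.prems(1) by auto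
    moreover have "insert a ({k, b} - {k}) = L" using ab kb by auto
    ultimately show ?thesis
      using tree_attach_pendant[OF T, of k] lv k(1) by (intro exI[of _ "insert {a, k} E"]) simp
  qed
qed

section \<open>Realizable deletion profiles\<close>

lemma tree_Dmin_delete:
  assumes T: "is_tree V E" and V: "card V \<ge> 2" and wpos: "\<forall>e\<in>E. w e > 0" and i: "i \<in> V"
  shows "Dmin V E w (V - {i}) =
    (if i \<in> leaves V E then sum w E - w (leaf_edge E i) else sum w E)"
proof (cases "i \<in> leaves V E")
  case True
  then obtain x where "pendant E i x" "leaf_edge E i = {i, x}" by (rule leaf_edgeE)
  then show ?thesis using Dmin_delete_pendant[OF T _ wpos] True by simp
next
  case False
  have "V \<noteq> {i}" using V by auto
  then obtain u where "u \<in> V" "u \<noteq> i" using i by blast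
  then obtain x where x: "{i, x} \<in> E" using tree_neighbour_exists[OF T i] by blast
  have "\<not> pendant E i x" using False i unfolding leaves_def by blast
  then obtain y where "{i, y} \<in> E" "y \<noteq> x"
    by (rule not_pendant_two_neighbours[OF tree_simple_graph[OF T] x])
  then show ?thesis using Dmin_delete_inner[OF T x] False by simp
qed

lemma exists_weights_leaf_edges:
  fixes a :: "'a \<Rightarrow> real"
  assumes T: "is_tree V E" and V: "card V \<ge> 3" and apos: "\<forall>l\<in>leaves V E. a l > 0"
    and le: "(\<Sum>l\<in>leaves V E. a l) \<le> M"
    and star: "(\<Sum>l\<in>leaves V E. a l) = M \<longleftrightarrow> leaf_edge E ` leaves V E = E"
  shows "\<exists>w. (\<forall>e\<in>E. w e > 0) \<and> sum w E = M \<and> (\<forall>l\<in>leaves V E. w (leaf_edge E l) = a l)"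
proof -
  let ?L = "leaves V E"
  define s where "s = (\<Sum>l\<in>?L. a l)"
  define R where "R = E - leaf_edge E ` ?L"
  define w where "w e = (if e \<in> leaf_edge E ` ?L then a (inv_into ?L (leaf_edge E) e)
    else (M - s) / card R)" for e
  have inj: "inj_on (leaf_edge E) ?L" using inj_on_leaf_edge[OF T V] .
  have finE: "finite E" using simple_graph_finite_edges[OF tree_simple_graph[OF T]] .
  have sub: "leaf_edge E ` ?L \<subseteq> E" by (auto intro: leaf_edge_in)
  have w_leaf: "w (leaf_edge E l) = a l" if "l \<in> ?L" for l
    using that inj unfolding w_def by simp
  have "sum w (leaf_edge E ` ?L) = s"
    unfolding s_def using sum.reindex[OF inj, of w] w_leaf by simp
  moreover have "sum w R = M - s"
  proof (cases "R = {}")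
    case False
    then have "card R > 0" using finE unfolding R_def by (simp add: card_gt_0_iff)
    then show ?thesis unfolding w_def R_def by simp
  qed (use star sub in \<open>auto simp: s_def R_def\<close>)
  ultimately have "sum w E = M"
    using sum.subset_diff[OF sub finE, of w] unfolding R_def by simp
  moreover have "w e > 0" if "e \<in> E" for e
  proof (cases "e \<in> leaf_edge E ` ?L")
    case True
    then show ?thesis using apos w_leaf by auto
  next
    case False
    then have "R \<noteq> {}" "e \<in> R" using that unfolding R_def by auto
    then have "s < M" "card R > 0" using star le sub finE unfolding s_def R_def
      by (auto simp: card_gt_0_iff)
    then show ?thesis using False unfolding w_def by simp
  qed
  ultimately show ?thesis using w_leaf by blast
qed

definition tree_realizable :: "'a set \<Rightarrow> ('a \<Rightarrow> real) \<Rightarrow> bool" where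
  "tree_realizable V D \<longleftrightarrow> (\<exists>E w. is_tree V E \<and> (\<forall>e\<in>E. w e > 0) \<and>
     (\<forall>i\<in>V. Dmin V E w (V - {i}) = D i))"

lemma tree_realizable_imp_gap_bounds:
  fixes D :: "'a \<Rightarrow> real"
  assumes "tree_realizable V D" and V: "card V \<ge> 3"
  defines "M \<equiv> Max (D ` V)"
    and "K \<equiv> {i \<in> V. D i = Max (D ` V)}" and "s \<equiv> \<Sum>i\<in>V. Max (D ` V) - D i"
  shows "s \<le> M \<and> (s = M \<longleftrightarrow> card K = 1) \<and> card K \<le> card V - 2"
proof -
  obtain E w where T: "is_tree V E" and wpos: "\<forall>e\<in>E. w e > 0"
    and DD: "\<forall>i\<in>V. Dmin V E w (V - {i}) = D i"
    using assms(1) unfolding tree_realizable_def by blast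
  let ?L = "leaves V E" and ?S = "leaf_edge E ` leaves V E"
  define W where "W = sum w E"
  have fin: "finite V" using V by (metis card.infinite not_numeral_le_zero)
  have finE: "finite E" using simple_graph_finite_edges[OF tree_simple_graph[OF T]] .
  have sub: "?S \<subseteq> E" by (auto intro: leaf_edge_in)
  have pos: "w (leaf_edge E l) > 0" if "l \<in> ?L" for l using wpos leaf_edge_in[OF that] by simp
  have D_eq: "D i = (if i \<in> ?L then W - w (leaf_edge E i) else W)" if "i \<in> V" for i
    using tree_Dmin_delete[OF T _ wpos that] DD that V unfolding W_def by simp
  obtain c where c: "c \<in> V - ?L" using tree_inner_nonempty[OF T V] by blast
  have D_le: "D i \<le> W" and D_eq_W: "D i = W \<longleftrightarrow> i \<notin> ?L" if "i \<in> V" for i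
    using D_eq[OF that] pos[of i] by auto
  have "D c = W" using c D_eq_W by blast
  then have "M = W" unfolding M_def using fin c D_le by (intro Max_eqI) auto
  then have K: "K = V - ?L" unfolding K_def M_def[symmetric] using D_eq_W by blast
  have "s = (\<Sum>i\<in>V. if i \<in> ?L then w (leaf_edge E i) else 0)"
    unfolding s_def M_def[symmetric] \<open>M = W\<close> using D_eq by (intro sum.cong) auto
  also have "\<dots> = (\<Sum>l\<in>?L. w (leaf_edge E l))"
    using fin leaves_subset[of V E] by (simp add: sum.If_cases Int_absorb1)
  also have "\<dots> = sum w ?S" using sum.reindex[OF inj_on_leaf_edge[OF T V], of w] by simp
  finally have s: "s = sum w ?S" .
  have split: "sum w E = sum w ?S + sum w (E - ?S)" using sum.subset_diff[OF sub finE] by (simp add: add.commute)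
  have "sum w (E - ?S) \<ge> 0" using wpos by (intro sum_nonneg) (auto simp: less_imp_le)
  then have "s \<le> M" using split s \<open>M = W\<close> unfolding W_def by simp
  moreover have "s = M \<longleftrightarrow> ?S = E"
  proof
    assume "s = M"
    then have "sum w (E - ?S) = 0" using split s \<open>M = W\<close> unfolding W_def by simp
    then have "E - ?S = {}" using sum_pos[of "E - ?S" w] finE wpos by fastforce
    then show "?S = E" using sub by blast
  qed (use s \<open>M = W\<close> in \<open>simp add: W_def\<close>)
  moreover have "card ?L \<ge> 2" using tree_two_leaves[OF T] V by simp
  then have "card K \<le> card V - 2"
    unfolding K using fin leaves_subset[of V E] by (simp add: card_Diff_subset finite_subset)
  ultimately show ?thesis using leaf_edges_eq_iff[OF T V] K by simp
qed

lemma gap_bounds_imp_tree_realizable: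
  fixes D :: "'a \<Rightarrow> real"
  assumes fin: "finite V" and V: "card V \<ge> 3"
  defines "M \<equiv> Max (D ` V)"
    and "K \<equiv> {i \<in> V. D i = Max (D ` V)}" and "s \<equiv> \<Sum>i\<in>V. Max (D ` V) - D i"
  assumes le: "s \<le> M" and star: "s = M \<longleftrightarrow> card K = 1" and K: "card K \<le> card V - 2"
  shows "tree_realizable V D"
proof -
  define L where "L = V - K"
  have "V \<noteq> {}" using V by auto
  then have "M \<in> D ` V" unfolding M_def using fin by simp
  then obtain k where k: "k \<in> K"
    unfolding K_def M_def by (metis (mono_tags, lifting) imageE mem_Collect_eq)
  have D_le: "D i \<le> M" if "i \<in> V" for i unfolding M_def using fin that by simp
  have KV: "K \<subseteq> V" unfolding K_def by blast
  have "card L \<ge> 2"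
    unfolding L_def using K V fin KV by (simp add: card_Diff_subset finite_subset)
  moreover have "L \<noteq> V" using k KV unfolding L_def by blast
  ultimately obtain E where T: "is_tree V E" and lv: "leaves V E = L"
    using exists_tree_with_leaves[OF fin, of L] unfolding L_def by blast
  have inner: "V - leaves V E = K" using lv KV unfolding L_def by blast
  have apos: "M - D l > 0" if "l \<in> L" for l
    using that D_le[of l] unfolding L_def K_def M_def by force
  have "s = (\<Sum>l\<in>L. M - D l) + (\<Sum>i\<in>K. M - D i)"
    unfolding s_def M_def[symmetric] L_def using sum.subset_diff[OF KV fin] by simp
  also have "(\<Sum>i\<in>K. M - D i) = 0" unfolding K_def M_def by simp
  finally have sL: "(\<Sum>l\<in>leaves V E. M - D l) = s" using lv by simp
  obtain w where wpos: "\<forall>e\<in>E. w e > 0" and W: "sum w E = M"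
    and w_leaf: "\<forall>l\<in>leaves V E. w (leaf_edge E l) = M - D l"
    using exists_weights_leaf_edges[OF T V, of "\<lambda>l. M - D l" M] apos lv le star sL inner
      leaf_edges_eq_iff[OF T V] by auto
  have "Dmin V E w (V - {i}) = D i" if "i \<in> V" for i
    using tree_Dmin_delete[OF T _ wpos that] V W w_leaf lv that
    unfolding L_def K_def M_def by auto
  then show ?thesis unfolding tree_realizable_def using T wpos by blast
qed

section \<open>The averaging conditions\<close>

lemma averaging_slack:
  fixes D :: "'a \<Rightarrow> real"
  assumes "finite V" and "i \<in> V"
  shows "(\<Sum>j\<in>V - {i}. D j) - (real (card V) - 2) * D i
    = (c - (\<Sum>j\<in>V. c - D j)) + (real (card V) - 1) * (c - D i)"
  using assms by (simp add: sum_diff1 sum_subtractf algebra_simps)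

lemma averaging_conditions_iff_gap_bounds:
  fixes D :: "'a \<Rightarrow> real"
  assumes fin: "finite V" and V: "card V \<ge> 2"
  defines "M \<equiv> Max (D ` V)"
    and "K \<equiv> {i \<in> V. D i = Max (D ` V)}" and "s \<equiv> \<Sum>i\<in>V. Max (D ` V) - D i"
  shows "((\<forall>i\<in>V. (real (card V) - 2) * D i \<le> (\<Sum>j\<in>V - {i}. D j))
      \<and> card {i\<in>V. (real (card V) - 2) * D i = (\<Sum>j\<in>V - {i}. D j)} \<le> 1
      \<and> ((\<exists>i\<in>V. (real (card V) - 2) * D i = (\<Sum>j\<in>V - {i}. D j)) \<or> card K \<ge> 2)
      \<and> card K \<le> card V - 2)
    \<longleftrightarrow> s \<le> M \<and> (s = M \<longleftrightarrow> card K = 1) \<and> card K \<le> card V - 2"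
proof -
  let ?n = "real (card V)"
  let ?tight = "{i\<in>V. (?n - 2) * D i = (\<Sum>j\<in>V - {i}. D j)}"
  have slack: "(\<Sum>j\<in>V - {i}. D j) - (?n - 2) * D i = (M - s) + (?n - 1) * (M - D i)"
    if "i \<in> V" for i
    unfolding s_def M_def using averaging_slack[OF fin that] .
  have n: "?n - 1 > 0" using V by simp
  have "V \<noteq> {}" using V by auto
  then have "M \<in> D ` V" unfolding M_def using fin by simp
  then obtain k where k: "k \<in> K"
    unfolding K_def M_def by (metis (mono_tags, lifting) imageE mem_Collect_eq)
  have gap: "M - D i \<ge> 0" and gap_K: "M - D i = 0 \<longleftrightarrow> i \<in> K" if "i \<in> V" for i
    using fin that unfolding K_def M_def by auto
  have all_iff: "(\<forall>i\<in>V. (?n - 2) * D i \<le> (\<Sum>j\<in>V - {i}. D j)) \<longleftrightarrow> s \<le> M"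
  proof
    assume "\<forall>i\<in>V. (?n - 2) * D i \<le> (\<Sum>j\<in>V - {i}. D j)"
    then show "s \<le> M" using slack[of k] gap_K[of k] k unfolding K_def by auto
  qed (use slack gap n in \<open>smt (verit) mult_nonneg_nonneg\<close>)
  have tight: "?tight = (if s = M then K else {})" if "s \<le> M"
  proof -
    have "(?n - 2) * D i = (\<Sum>j\<in>V - {i}. D j) \<longleftrightarrow> M - s = 0 \<and> M - D i = 0" if "i \<in> V" for i
      using slack[OF that] gap[OF that] \<open>s \<le> M\<close> n
      by (smt (verit) mult_eq_0_iff mult_nonneg_nonneg)
    then show ?thesis using gap_K unfolding K_def by auto
  qed
  have ex_tight: "(\<exists>i\<in>V. (?n - 2) * D i = (\<Sum>j\<in>V - {i}. D j)) \<longleftrightarrow> ?tight \<noteq> {}"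
    by blast
  have "card K \<noteq> 0" using k fin unfolding K_def by auto
  show ?thesis
  proof (cases "s \<le> M")
    case True
    then show ?thesis
      unfolding all_iff ex_tight tight[OF True] using k \<open>card K \<noteq> 0\<close> by auto
  qed (use all_iff in simp)
qed

lemma tree_realizable_iff_gap_bounds:
  fixes D :: "'a \<Rightarrow> real"
  assumes "finite V" and "card V \<ge> 3"
  defines "M \<equiv> Max (D ` V)"
    and "K \<equiv> {i \<in> V. D i = Max (D ` V)}" and "s \<equiv> \<Sum>i\<in>V. Max (D ` V) - D i"
  shows "tree_realizable V D \<longleftrightarrow> s \<le> M \<and> (s = M \<longleftrightarrow> card K = 1) \<and> card K \<le> card V - 2"
  unfolding M_def K_def s_def
  using tree_realizable_imp_gap_bounds[of V D] gap_bounds_imp_tree_realizable[of V D] assms(1,2) by blast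

theorem theorem3p2:
  fixes n :: nat and D :: "nat \<Rightarrow> real"
  assumes "n \<ge> 3"
    and "\<forall>i\<in>{1..n}. D i > 0"
  shows "(\<exists>E w. is_tree {1..n} E \<and> (\<forall>e\<in>E. w e > 0) \<and>
            (\<forall>i\<in>{1..n}. Dmin {1..n} E w ({1..n} - {i}) = D i))
     \<longleftrightarrow>
     ((\<forall>i\<in>{1..n}. (real n - 2) * D i \<le> (\<Sum>j\<in>{1..n} - {i}. D j))
      \<and> card {i\<in>{1..n}. (real n - 2) * D i = (\<Sum>j\<in>{1..n} - {i}. D j)} \<le> 1
      \<and> ((\<exists>i\<in>{1..n}. (real n - 2) * D i = (\<Sum>j\<in>{1..n} - {i}. D j))
          \<or> card {i\<in>{1..n}. D i = Max (D ` {1..n})} \<ge> 2)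
      \<and> card {i\<in>{1..n}. D i = Max (D ` {1..n})} \<le> n - 2)"
proof -
  have V: "finite {1..n}" "card {1..n} = n" by simp_all
  show ?thesis
    using tree_realizable_iff_gap_bounds[of "{1..n}" D] averaging_conditions_iff_gap_bounds[of "{1..n}" D]
      V assms(1)
    unfolding tree_realizable_def by simp
qed

end
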